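(* $\mathcal{L}_{AIL}\not\preceq\mathcal{L}_{FH}$: there exists $\psi\in\mathcal{L}_{AIL}$ such that no $\varphi\in\mathcal{L}_{FH}$ satisfies, for every epistemic model with awareness $M$ and every world $w$ of $M$, $M,w\vDash_{AIL}\psi$ iff $M,w\vDash_{FH}\varphi$.
   Context: Let $\mathcal{P}$ be a countable set of atoms and $\mathcal{G}$ a finite set of agents. An epistemic model with awareness is $M=\langle W,\{\sim_i,\mathscr{A}_i\}_{i\in\mathcal{G}},V\rangle$: $W\neq\emptyset$, $\sim_i$ an equivalence relation on $W$, $\mathscr{A}_i:W\to2^{\mathcal{P}}$ with $\mathscr{A}_i(w)=\mathscr{A}_i(v)$ whenever $(w,v)\in\sim_i$, $V:\mathcal{P}\to2^W$. $(w,v)\in\approx_i$ iff $\mathscr{A}_i(w)=\mathscr{A}_i(v)$ and $w,v$ agree on all $p\in\mathscr{A}_i(w)$. $\sim_i\circ\approx_i=\{(w,v):\exists t\,((w,t)\in\approx_i,(t,v)\in\sim_i)\}$; $R^+$ is the transitive closure. $\mathcal{L}_{AIL}$: $\varphi::=p\mid\neg\varphi\mid\varphi\wedge\varphi\mid A_i\varphi\mid I_i\varphi\mid E_i\varphi\mid[\approx]_i\varphi\mid[\circ^+]_i\varphi$; $\mathcal{L}_{FH}$ is the fragment without $[\approx]_i,[\circ^+]_i$. $\vDash_{AIL}$: $p$ iff $w\in V(p)$; Boolean usual; $A_i\varphi$ iff $At(\varphi)\subseteq\mathscr{A}_i(w)$ ($At$ = atoms occurring); $I_i\varphi$, $[\approx]_i\varphi$,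 $[\circ^+]_i\varphi$ iff $\varphi$ holds at all successors along $\sim_i$, $\approx_i$, $(\sim_i\circ\approx_i)^+$ respectively; $E_i\varphi$ iff $A_i\varphi$ and $[\circ^+]_i\varphi$ hold. $\vDash_{FH}$ on $\mathcal{L}_{FH}$ is the same except $E_i\varphi$ holds iff $A_i\varphi$ and $I_i\varphi$ hold. *)

theory Defs
  imports Main
begin

text \<open>Formulas of L_AIL over atoms 'p and agents 'g.  L_FH is the fragment
  without the modalities Approx and CircPlus.\<close>

datatype ('p, 'g) fm =
    Atom 'p
  | Neg "('p, 'g) fm"
  | Conj "('p, 'g) fm" "('p, 'g) fm"
  | Aw 'g "('p, 'g) fm"
  | Imp 'g "('p, 'g) fm"
  | Ex 'g "('p, 'g) fm"
  | Approx 'g "('p, 'g) fm"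
  | CircPlus 'g "('p, 'g) fm"

fun atoms :: "('p, 'g) fm \<Rightarrow> 'p set" where
  "atoms (Atom p) = {p}"
| "atoms (Neg f) = atoms f"
| "atoms (Conj f g) = atoms f \<union> atoms g"
| "atoms (Aw i f) = atoms f"
| "atoms (Imp i f) = atoms f"
| "atoms (Ex i f) = atoms f"
| "atoms (Approx i f) = atoms f"
| "atoms (CircPlus i f) = atoms f"

fun is_FH :: "('p, 'g) fm \<Rightarrow> bool" where
  "is_FH (Atom p) = True"
| "is_FH (Neg f) = is_FH f"
| "is_FH (Conj f g) = (is_FH f \<and> is_FH g)"
| "is_FH (Aw i f) = is_FH f"
| "is_FH (Imp i f) = is_FH f"
| "is_FH (Ex i f) = is_FH f"
| "is_FH (Approx i f) = False"
| "is_FH (CircPlus i f) = False"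

record ('w, 'p, 'g) model =
  W :: "'w set"
  sim :: "'g \<Rightarrow> ('w \<times> 'w) set"
  aw :: "'g \<Rightarrow> 'w \<Rightarrow> 'p set"
  val :: "'p \<Rightarrow> 'w set"

definition is_model :: "('w, 'p, 'g) model \<Rightarrow> bool" where
  "is_model M \<longleftrightarrow> W M \<noteq> {}
     \<and> (\<forall>i. equiv (W M) (sim M i))
     \<and> (\<forall>i w v. (w, v) \<in> sim M i \<longrightarrow> aw M i w = aw M i v)
     \<and> (\<forall>p. val M p \<subseteq> W M)"

definition approx :: "('w, 'p, 'g) model \<Rightarrow> 'g \<Rightarrow> ('w \<times> 'w) set" where
  "approx M i = {(w, v). w \<in> W M \<and> v \<in> W M \<and> aw M i w = aw M i v
      \<and> (\<forall>p \<in> aw M i w. (w \<in> val M p \<longleftrightarrow> v \<in> val M p))}"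

text \<open>sim_i \<circ> approx_i = {(w,v). \<exists>t. (w,t) \<in> approx_i \<and> (t,v) \<in> sim_i},
  i.e. relational composition approx_i O sim_i; then transitive closure.\<close>

definition circ_plus :: "('w, 'p, 'g) model \<Rightarrow> 'g \<Rightarrow> ('w \<times> 'w) set" where
  "circ_plus M i = (approx M i O sim M i)\<^sup>+"

fun sat_AIL :: "('w, 'p, 'g) model \<Rightarrow> 'w \<Rightarrow> ('p, 'g) fm \<Rightarrow> bool" where
  "sat_AIL M w (Atom p) = (w \<in> val M p)"
| "sat_AIL M w (Neg f) = (\<not> sat_AIL M w f)"
| "sat_AIL M w (Conj f g) = (sat_AIL M w f \<and> sat_AIL M w g)"
| "sat_AIL M w (Aw i f) = (atoms f \<subseteq> aw M i w)"
| "sat_AIL M w (Imp i f) = (\<forall>v. (w, v) \<in> sim M i \<longrightarrow> sat_AIL M v f)"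
| "sat_AIL M w (Ex i f) = (atoms f \<subseteq> aw M i w
      \<and> (\<forall>v. (w, v) \<in> circ_plus M i \<longrightarrow> sat_AIL M v f))"
| "sat_AIL M w (Approx i f) = (\<forall>v. (w, v) \<in> approx M i \<longrightarrow> sat_AIL M v f)"
| "sat_AIL M w (CircPlus i f) = (\<forall>v. (w, v) \<in> circ_plus M i \<longrightarrow> sat_AIL M v f)"

text \<open>FH semantics; only meaningful on the FH fragment (is_FH).  The clauses for
  Approx/CircPlus are irrelevant and just copied.\<close>

fun sat_FH :: "('w, 'p, 'g) model \<Rightarrow> 'w \<Rightarrow> ('p, 'g) fm \<Rightarrow> bool" where
  "sat_FH M w (Atom p) = (w \<in> val M p)"
| "sat_FH M w (Neg f) = (\<not> sat_FH M w f)"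
| "sat_FH M w (Conj f g) = (sat_FH M w f \<and> sat_FH M w g)"
| "sat_FH M w (Aw i f) = (atoms f \<subseteq> aw M i w)"
| "sat_FH M w (Imp i f) = (\<forall>v. (w, v) \<in> sim M i \<longrightarrow> sat_FH M v f)"
| "sat_FH M w (Ex i f) = (atoms f \<subseteq> aw M i w
      \<and> (\<forall>v. (w, v) \<in> sim M i \<longrightarrow> sat_FH M v f))"
| "sat_FH M w (Approx i f) = (\<forall>v. (w, v) \<in> approx M i \<longrightarrow> sat_FH M v f)"
| "sat_FH M w (CircPlus i f) = (\<forall>v. (w, v) \<in> circ_plus M i \<longrightarrow> sat_FH M v f)"

end

theory Submission
  imports Defs
begin

text \<open>The FH semantics only looks along \<open>\<sim>\<^sub>i\<close>, so FH truth at a world depends only on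
  its \<open>\<sim>\<^sub>i\<close>-generated submodel.  The relation \<open>\<approx>\<^sub>i\<close> ignores \<open>\<sim>\<^sub>i\<close>: for an agent aware of
  nothing it relates all worlds.  Take such an agent with discrete \<open>\<sim>\<^sub>i\<close>, one world where
  \<open>p\<close> holds, and add a second, \<open>\<sim>\<^sub>i\<close>-isolated world where \<open>p\<close> fails.  No FH formula sees
  the new world, but \<open>[\<approx>]\<^sub>i p\<close> becomes false.\<close>

lemma sat_FH_generated_submodel:
  assumes "is_FH \<phi>" and "w \<in> S"
    and sim_closed: "\<And>i v u. v \<in> S \<Longrightarrow> (v, u) \<in> sim M i \<Longrightarrow> u \<in> S"
    and sim_eq: "\<And>i v u. v \<in> S \<Longrightarrow> (v, u) \<in> sim M i \<longleftrightarrow> (v, u) \<in> sim M' i"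
    and aw_eq: "\<And>i v. v \<in> S \<Longrightarrow> aw M i v = aw M' i v"
    and val_eq: "\<And>p v. v \<in> S \<Longrightarrow> v \<in> val M p \<longleftrightarrow> v \<in> val M' p"
  shows "sat_FH M w \<phi> = sat_FH M' w \<phi>"
  using assms(1,2)
proof (induction \<phi> arbitrary: w)
  case (Imp i \<phi>)
  then show ?case using sim_closed sim_eq by (metis is_FH.simps(5) sat_FH.simps(5))
next
  case (Ex i \<phi>)
  then show ?case using sim_closed sim_eq aw_eq by (metis is_FH.simps(6) sat_FH.simps(6))
qed (auto simp: aw_eq val_eq)

definition blind_model :: "nat set \<Rightarrow> (nat, nat, 'g) model" where
  "blind_model A = \<lparr>W = A, sim = (\<lambda>i. Id_on A), aw = (\<lambda>i w. {}),
                     val = (\<lambda>p. if p = 0 then {0} else {})\<rparr>"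

lemma W_blind_model [simp]: "W (blind_model A) = A"
  by (simp add: blind_model_def)

lemma is_model_blind_model: "0 \<in> A \<Longrightarrow> is_model (blind_model A)"
  unfolding is_model_def blind_model_def by (auto simp: equiv_def refl_on_def sym_def trans_def)

lemma approx_blind_model: "approx (blind_model A) i = A \<times> A"
  by (auto simp: approx_def blind_model_def)

lemma sat_AIL_blind_model_Approx_Atom:
  "0 \<in> A \<Longrightarrow> sat_AIL (blind_model A) 0 (Approx i (Atom 0)) \<longleftrightarrow> A = {0}"
  by (auto simp: approx_blind_model) (auto simp: blind_model_def)

lemma sat_FH_blind_model_eq:
  "is_FH \<phi> \<Longrightarrow> sat_FH (blind_model {0}) 0 \<phi> = sat_FH (blind_model {0, 1}) 0 \<phi>"
  by (rule sat_FH_generated_submodel[where S = "{0}"]) (auto simp: blind_model_def)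

theorem lemma4:
  "\<exists>\<psi> :: (nat, 'g::finite) fm.
     \<forall>\<phi> :: (nat, 'g) fm. is_FH \<phi> \<longrightarrow>
       (\<exists>M :: (nat, nat, 'g) model. \<exists>w \<in> W M.
          is_model M \<and> \<not> (sat_AIL M w \<psi> \<longleftrightarrow> sat_FH M w \<phi>))"
proof -
  fix i :: 'g
  let ?\<psi> = "Approx i (Atom 0)"
  have "\<exists>M :: (nat, nat, 'g) model. \<exists>w \<in> W M.
          is_model M \<and> \<not> (sat_AIL M w ?\<psi> \<longleftrightarrow> sat_FH M w \<phi>)" if "is_FH \<phi>" for \<phi>
  proof (cases "sat_FH (blind_model {0} :: (nat, nat, 'g) model) 0 \<phi>")
    case True
    then have "sat_FH (blind_model {0, 1} :: (nat, nat, 'g) model) 0 \<phi>"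
      using sat_FH_blind_model_eq[OF \<open>is_FH \<phi>\<close>] by simp
    moreover have "\<not> sat_AIL (blind_model {0, 1} :: (nat, nat, 'g) model) 0 ?\<psi>"
      by (subst sat_AIL_blind_model_Approx_Atom) auto
    ultimately show ?thesis
      using is_model_blind_model[of "{0, 1}"] by force
  next
    case False
    moreover have "sat_AIL (blind_model {0} :: (nat, nat, 'g) model) 0 ?\<psi>"
      by (subst sat_AIL_blind_model_Approx_Atom) auto
    ultimately show ?thesis
      using is_model_blind_model[of "{0}"] by force
  qed
  then show ?thesis by blast
qed

end
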